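(* Let $\alpha=(\alpha_1,\dots,\alpha_s)\in\mathbb{K}_s$ and $1\le i\le s$. If $\alpha^i$ is symmetric, then $\alpha^j$ is non-symmetric for every $1\le j\le s$ with $j\neq i$.
   Context: $\mathbb{K}_s=\{(\alpha_1,\dots,\alpha_s)\in\mathbb{Z}^s:\ \alpha_k\alpha_{k+1}<0 \text{ for all } 1\le k\le s-1\}$, with all entries nonzero. For $\beta=(\beta_1,\dots,\beta_s)\in\mathbb{Z}^s$, $-\beta=(-\beta_1,\dots,-\beta_s)$ and $\overline{\beta}=(\beta_s,\dots,\beta_1)$; $\beta$ is symmetric if $\beta=-\overline{\beta}$ (as tuples). For $1\le i\le s$, $\alpha^i=(\alpha_1,\dots,\alpha_{i-1},\alpha_i*1,\alpha_{i+1},\dots,\alpha_s)$, where $\alpha_i*1=\alpha_i-1$ if $\alpha_i>0$ and $\alpha_i*1=\alpha_i+1$ otherwise. *)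

theory Defs
  imports Main
begin

text \<open>Tuples in Z^s are represented as int lists of length s; the paper's index k
  (1-based) corresponds to list position k - 1.\<close>

definition K :: "nat \<Rightarrow> int list set" where
  "K s = {a. length a = s \<and> (\<forall>k<s. a ! k \<noteq> 0) \<and>
              (\<forall>k. k + 1 < s \<longrightarrow> a ! k * a ! (k + 1) < 0)}"

definition star1 :: "int \<Rightarrow> int" where
  "star1 x = (if x > 0 then x - 1 else x + 1)"

definition alpha_mod :: "int list \<Rightarrow> nat \<Rightarrow> int list" where
  "alpha_mod a i = a[i - 1 := star1 (a ! (i - 1))]"

definition symmetric :: "int list \<Rightarrow> bool" where
  "symmetric b \<longleftrightarrow> b = map uminus (rev b)"

end

theory Submission
  imports Defs
begin

text \<open>Let \<open>b\<close> and \<open>c\<close> be obtained from \<open>\<alpha>\<close> by applying \<open>*1\<close> at distinct positions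
  \<open>p\<close> and \<open>q\<close>, and let \<open>r\<close> be the mirror position of \<open>p\<close>. If \<open>r = p\<close>, symmetry of \<open>c\<close>
  forces the untouched entry \<open>\<alpha>\<^sub>p\<close> to vanish. If \<open>r \<noteq> q\<close>, both \<open>b\<^sub>p\<close> and \<open>c\<^sub>p\<close> equal
  \<open>-\<alpha>\<^sub>r\<close>, i.e. \<open>\<alpha>\<^sub>p * 1 = \<alpha>\<^sub>p\<close>. If \<open>r = q\<close>, then \<open>\<alpha>\<^sub>p * 1 = -\<alpha>\<^sub>q\<close> and \<open>\<alpha>\<^sub>q * 1 = -\<alpha>\<^sub>p\<close>;
  since \<open>*1\<close> lowers the absolute value of a nonzero integer by one, this gives
  \<open>|\<alpha>\<^sub>p| - 1 = |\<alpha>\<^sub>q|\<close> and \<open>|\<alpha>\<^sub>q| - 1 = |\<alpha>\<^sub>p|\<close>.\<close>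

lemma star1_neq: "star1 x \<noteq> x"
  by (simp add: star1_def)

lemma abs_star1: "x \<noteq> 0 \<Longrightarrow> \<bar>star1 x\<bar> = \<bar>x\<bar> - 1"
  by (simp add: star1_def)

lemma symmetric_nth:
  assumes "symmetric b" "k < length b"
  shows "b ! k = - (b ! (length b - 1 - k))"
proof -
  have "b ! k = map uminus (rev b) ! k"
    using assms(1) unfolding symmetric_def by metis
  also have "\<dots> = - (b ! (length b - 1 - k))"
    using assms(2) by (simp add: rev_nth)
  finally show ?thesis .
qed

lemma symmetric_nth_middle:
  assumes "symmetric b" "k < length b" "length b - 1 - k = k"
  shows "b ! k = 0"
  using symmetric_nth[OF assms(1,2)] assms(3) by simp

lemma symmetric_update_star1_unique:
  fixes a :: "int list"
  assumes nonzero: "\<forall>k < length a. a ! k \<noteq> 0"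
    and p: "p < length a" and q: "q < length a"
    and sym_p: "symmetric (a[p := star1 (a ! p)])"
    and sym_q: "symmetric (a[q := star1 (a ! q)])"
  shows "p = q"
proof (rule ccontr)
  assume "p \<noteq> q"
  define b where "b = a[p := star1 (a ! p)]"
  define c where "c = a[q := star1 (a ! q)]"
  define r where "r = length a - 1 - p"
  have r: "r < length a" "length a - 1 - r = p"
    using p unfolding r_def by auto
  have bp: "b ! p = star1 (a ! p)" and cp: "c ! p = a ! p"
    using p \<open>p \<noteq> q\<close> unfolding b_def c_def by auto
  have b_mirror: "b ! p = - (b ! r)" and c_mirror: "c ! p = - (c ! r)"
    using symmetric_nth[of b p] symmetric_nth[of c p] sym_p sym_q p
    unfolding b_def c_def r_def by auto
  consider "r = p" | "r \<noteq> p" "r \<noteq> q" | "r = q" by blast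
  then show False
  proof cases
    case 1
    then have "c ! p = 0"
      using symmetric_nth_middle[of c p] sym_q p unfolding c_def r_def by simp
    then show False using cp nonzero p by simp
  next
    case 2
    then have "b ! r = c ! r" unfolding b_def c_def by simp
    then show False using b_mirror c_mirror bp cp star1_neq by metis
  next
    case 3
    have "c ! q = - (c ! p)"
      using symmetric_nth[of c q] sym_q q r 3 unfolding c_def by simp
    then have "star1 (a ! q) = - (a ! p)"
      using cp q unfolding c_def by simp
    moreover have "star1 (a ! p) = - (a ! q)"
      using b_mirror bp 3 \<open>p \<noteq> q\<close> unfolding b_def by simp
    ultimately show False
      using abs_star1[of "a ! p"] abs_star1[of "a ! q"] nonzero p q by fastforce
  qed
qed

theorem lemma2:
  fixes \<alpha> :: "int list" and s i :: nat
  assumes "\<alpha> \<in> K s" and "1 \<le> i" and "i \<le> s"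
    and "symmetric (alpha_mod \<alpha> i)"
  shows "\<forall>j. 1 \<le> j \<and> j \<le> s \<and> j \<noteq> i \<longrightarrow> \<not> symmetric (alpha_mod \<alpha> j)"
proof (intro allI impI notI)
  fix j
  assume j: "1 \<le> j \<and> j \<le> s \<and> j \<noteq> i" and "symmetric (alpha_mod \<alpha> j)"
  have "length \<alpha> = s" and "\<forall>k < length \<alpha>. \<alpha> ! k \<noteq> 0"
    using assms(1) unfolding K_def by auto
  then have "i - 1 = j - 1"
    using symmetric_update_star1_unique[of \<alpha> "i - 1" "j - 1"] assms(2-4) j
      \<open>symmetric (alpha_mod \<alpha> j)\<close> unfolding alpha_mod_def by auto
  then show False using assms(2) j by linarith
qed

end
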